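(* Let $n,x$ be integers with $1<x<n$, so that $G=C_{2n}(x,1,n)$ is a $5$-regular circulant graph. If $n\equiv x\equiv 0 \pmod 3$ and $x>\tfrac{2n}{3}$, then $G$ is word-representable.
   Context: Two distinct letters $x,y$ alternate in a word $w$ if, after deleting all other letters from $w$, the resulting word is of the form $xyxy\cdots$ or $yxyx\cdots$ (of even or odd length). A graph $G=(V,E)$ is word-representable if there is a word $w$ over the alphabet $V$, containing every letter of $V$ at least once, such that for all distinct $x,y\in V$, $xy\in E$ if and only if $x$ and $y$ alternate in $w$. For an integer $m$ and a set $R$ of positive integers each at most $m/2$, the circulant graph $C_m(R)$ has vertex set $\{0,1,\dots,m-1\}$, with $i$ and $j$ adjacent iff $\min(|i-j|,\,m-|i-j|)\in R$. $C_{2n}(x,1,n)$ denotes the circulant graph on $2n$ vertices with jump set $\{1,x,n\}$; it is $5$-regular exactly when $1<x<n$. *)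

theory Defs
  imports Main
begin

definition alternate :: "'a list \<Rightarrow> 'a \<Rightarrow> 'a \<Rightarrow> bool" where
  "alternate w x y \<longleftrightarrow>
     (let u = filter (\<lambda>z. z = x \<or> z = y) w in
        \<forall>i. Suc i < length u \<longrightarrow> u ! i \<noteq> u ! Suc i)"

definition word_representable :: "'a set \<Rightarrow> ('a \<Rightarrow> 'a \<Rightarrow> bool) \<Rightarrow> bool" where
  "word_representable V E \<longleftrightarrow>
     (\<exists>w. set w = V \<and>
        (\<forall>x\<in>V. \<forall>y\<in>V. x \<noteq> y \<longrightarrow> (E x y \<longleftrightarrow> alternate w x y)))"

definition circ_vertices :: "nat \<Rightarrow> nat set" where
  "circ_vertices m = {0..<m}"

definition circ_adj :: "nat \<Rightarrow> nat set \<Rightarrow> nat \<Rightarrow> nat \<Rightarrow> bool" where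
  "circ_adj m R i j \<longleftrightarrow> i < m \<and> j < m \<and> i \<noteq> j \<and>
     (let d = (if i \<le> j then j - i else i - j) in min d (m - d) \<in> R)"

end

theory Submission
  imports Defs
begin

(* Put L = 2n/3, so that 3L = 2n. Cutting the cycle into three arcs of length L and colouring
   vertex i by (i + (i div L)) mod 3 gives a proper 3-colouring: a jump of 1 advances the arc
   index by 0 or 1, a jump e in {x, n} satisfies L < e < 2L and 3 dvd e and so advances it by
   1 or 2, hence the colour changes in both cases, and wrapping around the cycle adds 3L to a
   vertex, which leaves its colour unchanged.

   Every 3-colourable graph is word-representable. Concatenate, for the vertices t taken in
   order of (colour, index), a permutation of all vertices in which t occurs twice, its two
   copies enclosing exactly its neighbours. For a non-edge yz the block of y contains yy; for
   an edge yz, with y of smaller colour, the restriction of the word to y and z is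
   (yz)^a yzy (zy)^b zyz (yz)^c. *)

lemma alternate_iff_successively:
  "alternate w x y \<longleftrightarrow> successively (\<noteq>) (filter (\<lambda>z. z = x \<or> z = y) w)"
  unfolding alternate_def Let_def successively_conv_nth by simp

lemma alternate_commute: "alternate w x y \<longleftrightarrow> alternate w y x"
proof -
  have "(\<lambda>z. z = x \<or> z = y) = (\<lambda>z. z = y \<or> z = x)" by auto
  then show ?thesis unfolding alternate_iff_successively by simp
qed

lemma successively_append_by_last:
  assumes "successively R xs" "xs \<noteq> []" "successively R (last xs # ys)"
  shows "successively R (xs @ ys) \<and> last (xs @ ys) = last (last xs # ys)"
  using assms by (cases ys) (auto simp: successively_append_iff)

lemma successively_concat_states:
  assumes "\<And>i. i < n \<Longrightarrow> successively R (s i # f i) \<and> last (s i # f i) = s (Suc i)"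
  shows "successively R (s 0 # concat (map f [0..<n])) \<and> last (s 0 # concat (map f [0..<n])) = s n"
  using assms
proof (induction n)
  case (Suc n)
  define xs where "xs = s 0 # concat (map f [0..<n])"
  have "successively R xs" "last xs = s n"
    using Suc unfolding xs_def by simp_all
  moreover have "successively R (s n # f n)" "last (s n # f n) = s (Suc n)"
    using Suc.prems by simp_all
  ultimately have "successively R (xs @ f n) \<and> last (xs @ f n) = s (Suc n)"
    using successively_append_by_last[of R xs "f n"] unfolding xs_def by simp
  then show ?case
    unfolding xs_def by simp
qed simp

lemma successively_concat_member:
  "successively R (concat xss) \<Longrightarrow> xs \<in> set xss \<Longrightarrow> successively R xs"
  by (induction xss) (auto simp: successively_append_iff)

lemma filter_pair_filter_upt:
  assumes "y \<noteq> z" "y < N" "z < N"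
  shows "filter (\<lambda>u. u = y \<or> u = z) (filter Q [0..<N]) = filter Q (if y < z then [y, z] else [z, y])"
proof -
  have pair: "filter (\<lambda>u. u = y \<or> u = z) [0..<N] = (if y < z then [y, z] else [z, y])"
    by (rule sorted_distinct_set_unique) (use assms in \<open>auto intro: sorted_wrt_filter\<close>)
  have commute: "filter (\<lambda>u. u = y \<or> u = z) (filter Q xs) = filter Q (filter (\<lambda>u. u = y \<or> u = z) xs)"
    for xs :: "nat list"
    by (simp add: filter_filter conj_commute)
  show ?thesis
    by (simp only: commute pair)
qed

lemma lex_rank_less_iff:
  fixes a b t y N :: nat
  assumes "t < N" "y < N"
  shows "a * N + t < b * N + y \<longleftrightarrow> a < b \<or> (a = b \<and> t < y)"
proof (cases a b rule: linorder_cases)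
  case less
  then have "a * N + N \<le> b * N"
    by (metis mult_Suc mult_le_mono1 Suc_leI add.commute)
  then show ?thesis using less assms by linarith
next
  case greater
  then have "b * N + N \<le> a * N"
    by (metis mult_Suc mult_le_mono1 Suc_leI add.commute)
  then show ?thesis using greater assms by linarith
qed simp

lemma lex_rank_less:
  fixes c k t N :: nat
  assumes "t < N" "c < k"
  shows "c * N + t < k * N"
  using lex_rank_less_iff[of t N 0 c k] assms by simp

(* Besides the two copies of t, which enclose exactly its neighbours, every vertex occurs once,
   arranged so that a pair y, z with col y < col z appears as z, y precisely when t lies strictly
   between y and z in the (colour, index) order. *)
definition three_colour_block :: "nat \<Rightarrow> (nat \<Rightarrow> nat \<Rightarrow> bool) \<Rightarrow> (nat \<Rightarrow> nat) \<Rightarrow> nat \<Rightarrow> nat list" where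
  "three_colour_block N E col t =
     filter (\<lambda>u. col u = col t \<and> t < u) [0..<N] @
     filter (\<lambda>u. col u = (col t + 1) mod 3 \<and> \<not> E t u) [0..<N] @ [t] @
     filter (\<lambda>u. col u = (col t + 1) mod 3 \<and> E t u) [0..<N] @
     filter (\<lambda>u. col u = (col t + 2) mod 3 \<and> E t u) [0..<N] @ [t] @
     filter (\<lambda>u. col u = (col t + 2) mod 3 \<and> \<not> E t u) [0..<N] @
     filter (\<lambda>u. col u = col t \<and> u < t) [0..<N]"

lemma filter_pair_three_colour_block:
  assumes "y < N" "z < N" "t < N" "t \<noteq> y" "t \<noteq> z" "col y < col z" "col z < 3" "col t < 3"
  shows "filter (\<lambda>u. u = y \<or> u = z) (three_colour_block N E col t) =
     (if col t < col y \<or> (col t = col y \<and> t < y) \<or> col z < col t \<or> (col t = col z \<and> z < t)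
      then [y, z] else [z, y])"
proof -
  have yz: "y \<noteq> z" using assms by auto
  have "col y = 0 \<and> col z = 1 \<or> col y = 0 \<and> col z = 2 \<or> col y = 1 \<and> col z = 2"
    using assms by arith
  moreover have "col t = 0 \<or> col t = 1 \<or> col t = 2" using assms by arith
  ultimately show ?thesis
    unfolding three_colour_block_def filter_append filter_pair_filter_upt[OF yz assms(1,2)]
    using assms(4,5) by (elim disjE conjE; cases "y < z"; simp)
qed

lemma filter_pair_three_colour_block_neighbour:
  assumes "t < N" "s < N" "t \<noteq> s" "E t s" "col t \<noteq> col s" "col t < 3" "col s < 3"
  shows "filter (\<lambda>u. u = t \<or> u = s) (three_colour_block N E col t) = [t, s, t]"
proof -
  have "col s = (col t + 1) mod 3 \<or> col s = (col t + 2) mod 3"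
    "col t \<noteq> (col t + 1) mod 3" "col t \<noteq> (col t + 2) mod 3" "(col t + 1) mod 3 \<noteq> (col t + 2) mod 3"
    using assms(5-7) by arith+
  then show ?thesis
    unfolding three_colour_block_def filter_append filter_pair_filter_upt[OF assms(3,1,2)]
    using assms(3,4) by (cases "t < s") auto
qed

lemma filter_pair_three_colour_block_non_neighbour:
  assumes "t < N" "s < N" "t \<noteq> s" "\<not> E t s" "col t < 3"
  shows "\<not> successively (\<noteq>) (filter (\<lambda>u. u = t \<or> u = s) (three_colour_block N E col t))"
proof -
  have "col t \<noteq> (col t + 1) mod 3" "col t \<noteq> (col t + 2) mod 3"
    using assms(5) by arith+
  then have "filter (\<lambda>u. u = t \<or> u = s) (filter (\<lambda>u. col u = (col t + 1) mod 3 \<and> E t u) [0..<N]) = []"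
    "filter (\<lambda>u. u = t \<or> u = s) (filter (\<lambda>u. col u = (col t + 2) mod 3 \<and> E t u) [0..<N]) = []"
    unfolding filter_pair_filter_upt[OF assms(3,1,2)] using assms(4) by auto
  then show ?thesis
    unfolding three_colour_block_def filter_append by (simp add: successively_append_iff)
qed

(* Slot c * N + t holds the block of t when t has colour c, so the blocks are sorted by
   (colour, index). *)
definition three_colour_slot :: "nat \<Rightarrow> (nat \<Rightarrow> nat \<Rightarrow> bool) \<Rightarrow> (nat \<Rightarrow> nat) \<Rightarrow> nat \<Rightarrow> nat list" where
  "three_colour_slot N E col r =
     (if col (r mod N) = r div N then three_colour_block N E col (r mod N) else [])"

definition three_colour_word :: "nat \<Rightarrow> (nat \<Rightarrow> nat \<Rightarrow> bool) \<Rightarrow> (nat \<Rightarrow> nat) \<Rightarrow> nat list" where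
  "three_colour_word N E col = concat (map (three_colour_slot N E col) [0..<3 * N])"

lemma alternate_three_colour_word_iff:
  "alternate (three_colour_word N E col) y z \<longleftrightarrow>
    successively (\<noteq>) (concat (map (filter (\<lambda>u. u = y \<or> u = z) \<circ> three_colour_slot N E col) [0..<3 * N]))"
  unfolding alternate_iff_successively three_colour_word_def filter_concat by (simp add: map_map)

lemma three_colour_slot_rank:
  "t < N \<Longrightarrow> three_colour_slot N E col (col t * N + t) = three_colour_block N E col t"
  unfolding three_colour_slot_def by simp

lemma three_colour_word_not_alternate:
  assumes "y < N" "z < N" "y \<noteq> z" "col y < 3" "\<not> E y z"
  shows "\<not> alternate (three_colour_word N E col) y z"
proof
  define P where "P = (\<lambda>u. u = y \<or> u = z)"
  assume "alternate (three_colour_word N E col) y z"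
  then have "successively (\<noteq>) (concat (map (filter P \<circ> three_colour_slot N E col) [0..<3 * N]))"
    unfolding alternate_three_colour_word_iff P_def .
  moreover have "filter P (three_colour_block N E col y) \<in> set (map (filter P \<circ> three_colour_slot N E col) [0..<3 * N])"
    using three_colour_slot_rank[OF assms(1)] lex_rank_less[OF assms(1,4)]
    by (auto intro!: image_eqI[where x = "col y * N + y"])
  ultimately show False
    using successively_concat_member filter_pair_three_colour_block_non_neighbour[where E = E and col = col, OF assms(1,2,3,5,4)]
    unfolding P_def by blast
qed

(* last_letter r is the last letter of the restriction of slots 0..<r to y and z
   (or z if that restriction is empty). *)
lemma filter_pair_three_colour_slot_step:
  assumes yN: "y < N" and zN: "z < N" and yz: "col y < col z" and "col z < 3"
    and col: "\<And>u. u < N \<Longrightarrow> col u < 3" and E: "E y z" "E z y"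
  defines "P \<equiv> \<lambda>u. u = y \<or> u = z"
    and "last_letter \<equiv> \<lambda>r. if col y * N + y < r \<and> r \<le> col z * N + z then y else z"
  shows "successively (\<noteq>) (last_letter r # filter P (three_colour_slot N E col r)) \<and>
    last (last_letter r # filter P (three_colour_slot N E col r)) = last_letter (Suc r)"
proof (cases "col (r mod N) = r div N")
  case False
  then have "r \<noteq> col y * N + y" "r \<noteq> col z * N + z" "three_colour_slot N E col r = []"
    using yN zN unfolding three_colour_slot_def by auto
  then show ?thesis unfolding last_letter_def by auto
next
  case True
  define t where "t = r mod N"
  have "t < N" unfolding t_def using yN by simp
  have r: "r = col t * N + t" using True unfolding t_def by (metis div_mult_mod_eq)
  have slot: "three_colour_slot N E col r = three_colour_block N E col t"
    unfolding three_colour_slot_def t_def using True by simp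
  have "y \<noteq> z" using yz by auto
  have "col y * N + y < col z * N + z" using lex_rank_less_iff[OF yN zN] yz by auto
  consider "t = y" | "t = z" | "t \<noteq> y" "t \<noteq> z" by blast
  then show ?thesis
  proof cases
    case 1
    then have "filter P (three_colour_block N E col t) = [y, z, y]"
      using filter_pair_three_colour_block_neighbour[of y N z E col] yN zN yz E \<open>y \<noteq> z\<close> \<open>col z < 3\<close>
      unfolding P_def by auto
    then show ?thesis
      using 1 r slot \<open>col y * N + y < col z * N + z\<close> \<open>y \<noteq> z\<close> unfolding last_letter_def by auto
  next
    case 2
    have "P = (\<lambda>u. u = z \<or> u = y)" unfolding P_def by auto
    then have "filter P (three_colour_block N E col t) = [z, y, z]"
      using 2 filter_pair_three_colour_block_neighbour[of z N y E col] yN zN yz E \<open>y \<noteq> z\<close> \<open>col z < 3\<close>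
      by auto
    then show ?thesis
      using 2 r slot \<open>col y * N + y < col z * N + z\<close> \<open>y \<noteq> z\<close> unfolding last_letter_def by auto
  next
    case 3
    have "r < col y * N + y \<longleftrightarrow> col t < col y \<or> (col t = col y \<and> t < y)"
      "col z * N + z < r \<longleftrightarrow> col z < col t \<or> (col t = col z \<and> z < t)"
      using lex_rank_less_iff[OF \<open>t < N\<close> yN] lex_rank_less_iff[OF zN \<open>t < N\<close>] unfolding r by auto
    moreover have "r \<noteq> col y * N + y" "r \<noteq> col z * N + z"
      using 3 yN zN unfolding t_def by auto
    moreover note filter_pair_three_colour_block[OF yN zN \<open>t < N\<close> 3 yz \<open>col z < 3\<close> col[OF \<open>t < N\<close>]]
    ultimately show ?thesis
      using \<open>y \<noteq> z\<close> unfolding last_letter_def slot P_def by auto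
  qed
qed

lemma three_colour_word_alternate:
  assumes "y < N" "z < N" "col y < col z" "col z < 3"
    and "\<And>u. u < N \<Longrightarrow> col u < 3" and "E y z" "E z y"
  shows "alternate (three_colour_word N E col) y z"
proof -
  define last_letter where "last_letter = (\<lambda>r. if col y * N + y < r \<and> r \<le> col z * N + z then y else z)"
  have "successively (\<noteq>)
      (last_letter 0 # concat (map (filter (\<lambda>u. u = y \<or> u = z) \<circ> three_colour_slot N E col) [0..<3 * N]))"
    by (rule conjunct1[OF successively_concat_states])
      (use filter_pair_three_colour_slot_step[OF assms] in \<open>simp add: last_letter_def\<close>)
  then show ?thesis
    unfolding alternate_three_colour_word_iff by (auto simp only: successively_Cons successively.simps)
qed

lemma set_three_colour_block:
  "t < N \<Longrightarrow> set (three_colour_block N E col t) \<subseteq> {0..<N}"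
  "t \<in> set (three_colour_block N E col t)"
  unfolding three_colour_block_def by auto

lemma set_three_colour_word:
  assumes "\<And>u. u < N \<Longrightarrow> col u < 3"
  shows "set (three_colour_word N E col) = {0..<N}"
proof
  show "set (three_colour_word N E col) \<subseteq> {0..<N}"
  proof
    fix u assume "u \<in> set (three_colour_word N E col)"
    then obtain r where "r < 3 * N" "u \<in> set (three_colour_slot N E col r)"
      unfolding three_colour_word_def by auto
    then have "u \<in> set (three_colour_block N E col (r mod N))" "r mod N < N"
      unfolding three_colour_slot_def by (simp_all split: if_splits)
    then show "u \<in> {0..<N}"
      using set_three_colour_block(1) by blast
  qed
  show "{0..<N} \<subseteq> set (three_colour_word N E col)"
  proof
    fix u assume "u \<in> {0..<N}"
    then have "u < N" by simp
    then have "u \<in> set (three_colour_slot N E col (col u * N + u))"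
      "col u * N + u \<in> set [0..<3 * N]"
      using three_colour_slot_rank[of u N E col] set_three_colour_block(2)[of u N E col]
        lex_rank_less[of u N "col u" 3] assms[of u] by simp_all
    then show "u \<in> set (three_colour_word N E col)"
      unfolding three_colour_word_def by auto
  qed
qed

theorem three_colourable_word_representable:
  fixes N :: nat and E :: "nat \<Rightarrow> nat \<Rightarrow> bool" and col :: "nat \<Rightarrow> nat"
  assumes sym: "\<And>u v. u < N \<Longrightarrow> v < N \<Longrightarrow> E u v \<Longrightarrow> E v u"
    and col: "\<And>u. u < N \<Longrightarrow> col u < 3"
    and proper: "\<And>u v. u < N \<Longrightarrow> v < N \<Longrightarrow> E u v \<Longrightarrow> col u \<noteq> col v"
  shows "word_representable {0..<N} E"
  unfolding word_representable_def
proof (intro exI conjI ballI impI)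
  show "set (three_colour_word N E col) = {0..<N}"
    using col by (rule set_three_colour_word)
  fix y z assume "y \<in> {0..<N}" "z \<in> {0..<N}" "y \<noteq> z"
  then have "y < N" "z < N" by auto
  show "E y z \<longleftrightarrow> alternate (three_colour_word N E col) y z"
  proof
    assume "E y z"
    then have "E z y" using sym \<open>y < N\<close> \<open>z < N\<close> by blast
    have "col y < col z \<or> col z < col y"
      using proper \<open>E y z\<close> \<open>y < N\<close> \<open>z < N\<close> by (auto simp: nat_neq_iff)
    then show "alternate (three_colour_word N E col) y z"
    proof
      assume "col y < col z"
      then show ?thesis
        using three_colour_word_alternate[where E = E and col = col, OF \<open>y < N\<close> \<open>z < N\<close> _ col[OF \<open>z < N\<close>] col \<open>E y z\<close> \<open>E z y\<close>]
        by simp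
    next
      assume "col z < col y"
      then show ?thesis
        using three_colour_word_alternate[where E = E and col = col, OF \<open>z < N\<close> \<open>y < N\<close> _ col[OF \<open>y < N\<close>] col \<open>E z y\<close> \<open>E y z\<close>]
        unfolding alternate_commute[of _ y] by simp
    qed
  next
    show "alternate (three_colour_word N E col) y z \<Longrightarrow> E y z"
      using three_colour_word_not_alternate[where E = E and col = col, OF \<open>y < N\<close> \<open>z < N\<close> \<open>y \<noteq> z\<close> col[OF \<open>y < N\<close>]]
      by blast
  qed
qed

definition arc_colour :: "nat \<Rightarrow> nat \<Rightarrow> nat" where
  "arc_colour L i = (i + i div L) mod 3"

lemma arc_colour_add_period:
  assumes "0 < L"
  shows "arc_colour L (a + 3 * L) = arc_colour L a"
proof -
  have "a + 3 * L + (a + 3 * L) div L = (a + a div L) + 3 * (L + 1)"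
    using assms by simp
  then show ?thesis
    unfolding arc_colour_def by (metis mod_mult_self2)
qed

lemma arc_colour_add_neq:
  assumes "0 < L" and e: "e = 1 \<or> (L < e \<and> e < 2 * L \<and> 3 dvd e)"
  shows "arc_colour L (a + e) \<noteq> arc_colour L a"
proof -
  define q where "q = (a mod L + e) div L"
  have "a + e = (a mod L + e) + a div L * L"
    by simp
  then have div: "(a + e) div L = a div L + q"
    unfolding q_def using \<open>0 < L\<close> by (metis div_mult_self1 not_gr0)
  have "a mod L < L" using \<open>0 < L\<close> by simp
  have "(e + q) mod 3 \<noteq> 0"
    using e
  proof
    assume "e = 1"
    then have "q < 2" unfolding q_def using \<open>a mod L < L\<close> by (simp add: less_mult_imp_div_less)
    then show ?thesis using \<open>e = 1\<close> by (auto simp: less_2_cases_iff)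
  next
    assume "L < e \<and> e < 2 * L \<and> 3 dvd e"
    moreover have "a mod L + e < 3 * L" "L \<le> a mod L + e"
      using \<open>a mod L < L\<close> calculation by linarith+
    ultimately have "0 < q" "q < 3" "3 dvd e"
      unfolding q_def using \<open>0 < L\<close> by (simp_all add: less_mult_imp_div_less div_greater_zero_iff)
    then show ?thesis by presburger
  qed
  moreover have "(w + s) mod 3 \<noteq> w mod 3" if "s mod 3 \<noteq> 0" for w s :: nat
    using that by presburger
  moreover have "a + e + (a + e) div L = (a + a div L) + (e + q)"
    unfolding div by simp
  ultimately show ?thesis
    unfolding arc_colour_def by metis
qed

lemma circ_adj_sym: "circ_adj m R u v \<Longrightarrow> circ_adj m R v u"
  unfolding circ_adj_def Let_def by (auto split: if_splits)

lemma circulant_arc_colour_proper: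
  assumes R: "\<And>e. e \<in> R \<Longrightarrow> e = 1 \<or> (L < e \<and> e < 2 * L \<and> 3 dvd e)"
    and adj: "circ_adj (3 * L) R u v"
  shows "arc_colour L u \<noteq> arc_colour L v"
proof -
  have ordered: "arc_colour L u \<noteq> arc_colour L v" if "u < v" "circ_adj (3 * L) R u v" for u v
  proof -
    have "v < 3 * L" and d: "min (v - u) (3 * L - (v - u)) \<in> R"
      using that unfolding circ_adj_def Let_def by auto
    then have "0 < L" by simp
    show ?thesis
    proof (cases "v - u \<le> 3 * L - (v - u)")
      case True
      then have "v - u \<in> R" using d by (simp only: min_def if_True)
      then have "arc_colour L (u + (v - u)) \<noteq> arc_colour L u"
        using arc_colour_add_neq[OF \<open>0 < L\<close> R] by blast
      then show ?thesis using \<open>u < v\<close> by simp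
    next
      case False
      then have "3 * L - (v - u) \<in> R" using d by (simp only: min_def if_False)
      then have "arc_colour L (v + (3 * L - (v - u))) \<noteq> arc_colour L v"
        using arc_colour_add_neq[OF \<open>0 < L\<close> R] by blast
      moreover have "v + (3 * L - (v - u)) = u + 3 * L"
        using \<open>u < v\<close> \<open>v < 3 * L\<close> by simp
      ultimately show ?thesis
        using arc_colour_add_period[OF \<open>0 < L\<close>] by metis
    qed
  qed
  have "u < v \<or> v < u"
    using adj unfolding circ_adj_def by auto
  then show ?thesis
    using ordered[OF _ adj] ordered[OF _ circ_adj_sym[OF adj]] by auto
qed

theorem theorem22:
  fixes n x :: nat
  assumes "1 < x" and "x < n"
    and "n mod 3 = 0" and "x mod 3 = 0"
    and "3 * x > 2 * n"
  shows "word_representable (circ_vertices (2 * n)) (circ_adj (2 * n) {1, x, n})"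
proof -
  obtain k where "n = 3 * k" using \<open>n mod 3 = 0\<close> by blast
  define L where "L = 2 * k"
  have "2 * n = 3 * L" unfolding L_def \<open>n = 3 * k\<close> by simp
  have jumps: "e = 1 \<or> (L < e \<and> e < 2 * L \<and> 3 dvd e)" if "e \<in> {1, x, n}" for e
    using that assms unfolding L_def \<open>n = 3 * k\<close> by auto
  have "arc_colour L u \<noteq> arc_colour L v" if "circ_adj (3 * L) {1, x, n} u v" for u v
    using circulant_arc_colour_proper[OF jumps that] .
  moreover have "arc_colour L u < 3" for u
    unfolding arc_colour_def by simp
  ultimately show ?thesis
    unfolding circ_vertices_def \<open>2 * n = 3 * L\<close>
    using three_colourable_word_representable[where col = "arc_colour L"] circ_adj_sym by metis
qed

end
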